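(* For every prime power $q$ and all $k,r,\ell,m\in\mathbb{N}$ such that $k\leq r\leq\ell\leq q/2$, $m(k-1)<r$, and $m(\ell-1)<n:=q-r$, there exists an $[[n,\,k,\,\geq\ell+1-r]]_q$ quantum CSS code $Q$ (with a $Z$ encoding function on $\mathbb{F}_{q^k}$) that is $m$-multiplication-friendly.
   Context: $x*y$ is the componentwise product, $x\cdot y=\sum_ix_iy_i$, $V^\perp$ the dual. A quantum CSS code $\mathrm{CSS}(Q_X,Q_Z)$ of length $n$ over $\mathbb{F}_q$ is a pair of subspaces $Q_X,Q_Z\subseteq\mathbb{F}_q^n$ with $Q_X^\perp\subseteq Q_Z$, of dimension $k=\dim Q_Z-\dim Q_X^\perp$ and distance $\min\{|y|:y\in(Q_X\setminus Q_Z^\perp)\cup(Q_Z\setminus Q_X^\perp)\}$. A $Z$ encoding function is an $\mathbb{F}_q$-linear isomorphism $\mathrm{Enc}_Z:\mathbb{F}_{q^k}\to Q_Z/Q_X^\perp$ (viewing $\mathbb{F}_{q^k}$ as a $k$-dimensional $\mathbb{F}_q$-space). A code $Q=\mathrm{CSS}(Q_X,Q_Z;\mathrm{Enc}_Z)$ is $m$-multiplication-friendly if there is an $\mathbb{F}_q$-linear $\mathrm{Dec}_Z:\mathbb{F}_q^n\to\mathbb{F}_{q^k}$ such that for all $z_1,\dots,z_m\in\mathbb{F}_{q^k}$ and all $z_h'\in\mathrm{Enc}_Z(z_h)$, $z_1z_2\cdots z_m=\mathrm{Dec}_Z(z_1'*\cdots*z_m')$. *)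

theory Defs
  imports Complex_Main "HOL-Library.Function_Algebras" "HOL-Library.Cardinality"
begin

text \<open>Vectors of length n over a field are modelled as functions nat => 'a that
vanish at every index >= n (coordinates 0..n-1).\<close>

definition vecs :: "nat \<Rightarrow> (nat \<Rightarrow> 'a::field) set" where
  "vecs n = {v. \<forall>i\<ge>n. v i = 0}"

definition vscale :: "'a::field \<Rightarrow> (nat \<Rightarrow> 'a) \<Rightarrow> (nat \<Rightarrow> 'a)" where
  "vscale c v = (\<lambda>i. c * v i)"

definition is_subspace :: "nat \<Rightarrow> (nat \<Rightarrow> 'a::field) set \<Rightarrow> bool" where
  "is_subspace n V \<longleftrightarrow> V \<subseteq> vecs n \<and> 0 \<in> V \<and>
     (\<forall>x\<in>V. \<forall>y\<in>V. x + y \<in> V) \<and> (\<forall>c. \<forall>x\<in>V. vscale c x \<in> V)"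

definition sdim :: "(nat \<Rightarrow> 'a::field) set \<Rightarrow> nat" where
  "sdim V = vector_space.dim (vscale :: 'a \<Rightarrow> _) V"

definition dotp :: "nat \<Rightarrow> (nat \<Rightarrow> 'a::field) \<Rightarrow> (nat \<Rightarrow> 'a) \<Rightarrow> 'a" where
  "dotp n x y = (\<Sum>i<n. x i * y i)"

definition dual :: "nat \<Rightarrow> (nat \<Rightarrow> 'a::field) set \<Rightarrow> (nat \<Rightarrow> 'a) set" where
  "dual n V = {y \<in> vecs n. \<forall>x\<in>V. dotp n x y = 0}"

definition hweight :: "nat \<Rightarrow> (nat \<Rightarrow> 'a::zero) \<Rightarrow> nat" where
  "hweight n x = card {i. i < n \<and> x i \<noteq> 0}"

definition is_css :: "nat \<Rightarrow> (nat \<Rightarrow> 'a::field) set \<Rightarrow> (nat \<Rightarrow> 'a) set \<Rightarrow> bool" where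
  "is_css n QX QZ \<longleftrightarrow> is_subspace n QX \<and> is_subspace n QZ \<and> dual n QX \<subseteq> QZ"

definition css_dim :: "nat \<Rightarrow> (nat \<Rightarrow> 'a::field) set \<Rightarrow> (nat \<Rightarrow> 'a) set \<Rightarrow> nat" where
  "css_dim n QX QZ = sdim QZ - sdim (dual n QX)"

definition css_dist :: "nat \<Rightarrow> (nat \<Rightarrow> 'a::field) set \<Rightarrow> (nat \<Rightarrow> 'a) set \<Rightarrow> nat" where
  "css_dist n QX QZ = Min (hweight n ` ((QX - dual n QZ) \<union> (QZ - dual n QX)))"

definition coset :: "(nat \<Rightarrow> 'a::field) set \<Rightarrow> (nat \<Rightarrow> 'a) \<Rightarrow> (nat \<Rightarrow> 'a) set" where
  "coset W x = {x + w | w. w \<in> W}"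

definition quot :: "nat \<Rightarrow> (nat \<Rightarrow> 'a::field) set \<Rightarrow> (nat \<Rightarrow> 'a) set \<Rightarrow> (nat \<Rightarrow> 'a) set set" where
  "quot n QX QZ = coset (dual n QX) ` QZ"

text \<open>Z encoding function: an F_q-linear isomorphism F_{q^k} -> Q_Z/Q_X^perp.
  The field F_{q^k} is a type 'b with an embedding emb : F_q -> F_{q^k}, which makes it an
  F_q-vector space via (c, z) |-> emb c * z.  Quotient operations are the usual
  representative-wise ones.\<close>
definition is_enc_Z ::
  "('a::field \<Rightarrow> 'b::field) \<Rightarrow> nat \<Rightarrow> (nat \<Rightarrow> 'a) set \<Rightarrow> (nat \<Rightarrow> 'a) set \<Rightarrow> ('b \<Rightarrow> (nat \<Rightarrow> 'a) set) \<Rightarrow> bool" where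
  "is_enc_Z emb n QX QZ Enc \<longleftrightarrow>
     bij_betw Enc UNIV (quot n QX QZ) \<and>
     (\<forall>a b x y. x \<in> Enc a \<longrightarrow> y \<in> Enc b \<longrightarrow> x + y \<in> Enc (a + b)) \<and>
     (\<forall>c a x. x \<in> Enc a \<longrightarrow> vscale c x \<in> Enc (emb c * a))"

definition mult_friendly ::
  "('a::field \<Rightarrow> 'b::field) \<Rightarrow> nat \<Rightarrow> nat \<Rightarrow> ('b \<Rightarrow> (nat \<Rightarrow> 'a) set) \<Rightarrow> bool" where
  "mult_friendly emb n m Enc \<longleftrightarrow>
     (\<exists>Dec :: (nat \<Rightarrow> 'a) \<Rightarrow> 'b.
        (\<forall>x\<in>vecs n. \<forall>y\<in>vecs n. Dec (x + y) = Dec x + Dec y) \<and>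
        (\<forall>c. \<forall>x\<in>vecs n. Dec (vscale c x) = emb c * Dec x) \<and>
        (\<forall>(z :: nat \<Rightarrow> 'b) (z' :: nat \<Rightarrow> nat \<Rightarrow> 'a).
           (\<forall>h<m. z' h \<in> Enc (z h)) \<longrightarrow>
           (\<Prod>h<m. z h) = Dec (\<lambda>i. if i < n then (\<Prod>h<m. z' h i) else 0)))"

definition field_emb :: "('a::field \<Rightarrow> 'b::field) \<Rightarrow> bool" where
  "field_emb emb \<longleftrightarrow> emb 1 = 1 \<and> (\<forall>x y. emb (x + y) = emb x + emb y) \<and>
     (\<forall>x y. emb (x * y) = emb x * emb y)"

end

theory Submission
  imports Defs "HOL-Computational_Algebra.Polynomial" "HOL-Algebra.Multiplicative_Group"
begin

text \<open>Let \<open>\<theta>\<close> be a primitive element of \<open>\<bbbF>\<^sub>q\<^sub>\<^sup>k\<close>, so that \<open>f \<mapsto> f(\<theta>)\<close> maps the polynomials of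
  degree \<open>< k\<close> over \<open>\<bbbF>\<^sub>q\<close> onto \<open>\<bbbF>\<^sub>q\<^sub>\<^sup>k\<close>, and choose \<open>n = q - r\<close> distinct points of \<open>\<bbbF>\<^sub>q\<close>, none of which
  embeds as \<open>\<theta>\<close>. Take \<open>Q\<^sub>Z\<close> to be the Reed--Solomon code of evaluations of polynomials of degree \<open>< l\<close>,
  \<open>Q\<^sub>X\<^sup>\<perp>\<close> its subcode of polynomials vanishing at \<open>\<theta>\<close>, and let \<open>Enc z\<close> consist of the evaluations
  of polynomials with value \<open>z\<close> at \<open>\<theta>\<close>. Nonzero words of \<open>Q\<^sub>Z\<close> have weight \<open>\<ge> n + 1 - l\<close> by
  counting roots, and nonzero words orthogonal to \<open>Q\<^sub>X\<^sup>\<perp>\<close> have weight \<open>\<ge> l + 1 - k\<close>, since such a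
  word can be tested against a multiple of a degree \<open>\<le> k\<close> polynomial vanishing at \<open>\<theta>\<close>. The
  coordinatewise product of \<open>m\<close> codewords is the evaluation of the product polynomial, of
  degree \<open>\<le> m(l - 1) < n\<close>; Lagrange interpolation recovers it, and evaluating at \<open>\<theta>\<close> gives the
  product of the encoded elements.\<close>

section \<open>Coordinate vectors and dual codes\<close>

interpretation vs: vector_space "vscale :: 'a::field \<Rightarrow> (nat \<Rightarrow> 'a) \<Rightarrow> (nat \<Rightarrow> 'a)"
  by unfold_locales (auto simp: vscale_def fun_eq_iff algebra_simps)

interpretation vsp: vector_space_pair "vscale :: 'a::field \<Rightarrow> (nat \<Rightarrow> 'a) \<Rightarrow> (nat \<Rightarrow> 'a)"
  "vscale :: 'a::field \<Rightarrow> (nat \<Rightarrow> 'a) \<Rightarrow> (nat \<Rightarrow> 'a)"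
  by unfold_locales

lemma vscale_apply [simp]: "vscale c v i = c * v i"
  by (simp add: vscale_def)

lemma sum_fun_apply: "(\<Sum>j\<in>A. (F j :: nat \<Rightarrow> 'a::comm_monoid_add)) i = (\<Sum>j\<in>A. F j i)"
  by (induction A rule: infinite_finite_induct) auto

lemma is_subspace_imp_subspace: "is_subspace n V \<Longrightarrow> vs.subspace V"
  unfolding is_subspace_def vs.subspace_def by auto

lemma card_span_independent:
  fixes B :: "(nat \<Rightarrow> 'a::{field,finite}) set"
  assumes fin: "finite B" and ind: "vs.independent B"
  shows "card (vs.span B) = CARD('a) ^ card B"
proof -
  define comb where "comb = (\<lambda>u. \<Sum>v\<in>B. vscale (u v) v)"
  have span_eq: "vs.span B = comb ` (B \<rightarrow>\<^sub>E UNIV)"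
  proof
    show "vs.span B \<subseteq> comb ` (B \<rightarrow>\<^sub>E UNIV)"
    proof
      fix x assume "x \<in> vs.span B"
      then obtain u where u: "x = comb u" using vs.span_finite[OF fin] by (auto simp: comb_def)
      have "comb u = comb (restrict u B)" unfolding comb_def by (rule sum.cong) auto
      then show "x \<in> comb ` (B \<rightarrow>\<^sub>E UNIV)" using u by auto
    qed
    show "comb ` (B \<rightarrow>\<^sub>E UNIV) \<subseteq> vs.span B"
      unfolding comb_def by (blast intro: vs.span_sum vs.span_scale vs.span_base)
  qed
  have inj: "inj_on comb (B \<rightarrow>\<^sub>E UNIV)"
  proof (rule inj_onI)
    fix u u' assume u: "u \<in> B \<rightarrow>\<^sub>E UNIV" and u': "u' \<in> B \<rightarrow>\<^sub>E UNIV" and eq: "comb u = comb u'"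
    have "(\<Sum>v\<in>B. vscale (u v - u' v) v) = comb u - comb u'"
      unfolding comb_def by (simp add: vs.scale_left_diff_distrib sum_subtractf)
    with eq have "(\<Sum>v\<in>B. vscale (u v - u' v) v) = 0" by simp
    then have "\<forall>v\<in>B. u v - u' v = 0"
      using vs.independentD[OF ind fin subset_refl, of "\<lambda>v. u v - u' v"] by blast
    then show "u = u'" by (intro PiE_ext[OF u u']) auto
  qed
  have "card (vs.span B) = card (B \<rightarrow>\<^sub>E (UNIV :: 'a set))"
    using span_eq card_image[OF inj] by simp
  then show ?thesis by (simp add: card_PiE fin)
qed

lemma card_subspace:
  fixes V :: "(nat \<Rightarrow> 'a::{field,finite}) set"
  assumes "finite V" "vs.subspace V"
  shows "card V = CARD('a) ^ vs.dim V"
proof -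
  obtain B where B: "B \<subseteq> V" "vs.independent B" "V \<subseteq> vs.span B" "card B = vs.dim V"
    by (rule vs.basis_exists)
  then have "vs.span B = V" using assms vs.span_subspace by blast
  with B assms show ?thesis using card_span_independent[of B] finite_subset by metis
qed

lemma bij_betw_restrict_vecs:
  "bij_betw (\<lambda>v. restrict v {..<n}) (vecs n) ({..<n} \<rightarrow>\<^sub>E (UNIV :: 'a::field set))"
proof (rule bij_betwI')
  fix x y :: "nat \<Rightarrow> 'a" assume "x \<in> vecs n" "y \<in> vecs n"
  then show "(restrict x {..<n} = restrict y {..<n}) = (x = y)"
    unfolding vecs_def by (auto simp: fun_eq_iff restrict_def) (metis not_less)
next
  fix y assume y: "y \<in> {..<n} \<rightarrow>\<^sub>E (UNIV :: 'a set)"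
  show "\<exists>x\<in>vecs n. y = restrict x {..<n}"
    by (rule bexI[of _ "\<lambda>i. if i < n then y i else 0"])
       (use y in \<open>auto simp: vecs_def restrict_def fun_eq_iff PiE_def extensional_def\<close>)
qed auto

lemma card_vecs: "card (vecs n :: (nat \<Rightarrow> 'a::{field,finite}) set) = CARD('a) ^ n"
  using bij_betw_same_card[OF bij_betw_restrict_vecs] by (simp add: card_PiE)

lemma finite_vecs: "finite (vecs n :: (nat \<Rightarrow> 'a::{field,finite}) set)"
proof -
  have "finite ({..<n} \<rightarrow>\<^sub>E (UNIV :: 'a set))" by (rule finite_PiE) auto
  then show ?thesis using bij_betw_finite[OF bij_betw_restrict_vecs] by blast
qed

lemma dotp_comm: "dotp n x y = dotp n y x"
  by (simp add: dotp_def mult.commute)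

lemma dotp_add_left: "dotp n (x + x') y = dotp n x y + dotp n x' y"
  by (simp add: dotp_def algebra_simps sum.distrib)

lemma dotp_add_right: "dotp n x (y + y') = dotp n x y + dotp n x y'"
  by (simp add: dotp_def algebra_simps sum.distrib)

lemma dotp_diff_right: "dotp n x (y - y') = dotp n x y - dotp n x y'"
  by (simp add: dotp_def algebra_simps sum_subtractf)

lemma dotp_scale_left: "dotp n (vscale c x) y = c * dotp n x y"
  by (simp add: dotp_def algebra_simps sum_distrib_left)

lemma dotp_scale_right: "dotp n x (vscale c y) = c * dotp n x y"
  by (simp add: dotp_def algebra_simps sum_distrib_left)

lemma dotp_zero_right [simp]: "dotp n x 0 = 0"
  by (simp add: dotp_def)

lemma is_subspace_dual: "is_subspace n (dual n X)"
  unfolding is_subspace_def dual_def vecs_def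
  by (auto simp: dotp_add_right dotp_scale_right)

lemma finite_dual: "finite (dual n X :: (nat \<Rightarrow> 'a::{field,finite}) set)"
  by (rule finite_subset[OF _ finite_vecs]) (auto simp: dual_def)

lemma subset_dual_dual: "X \<subseteq> vecs n \<Longrightarrow> X \<subseteq> dual n (dual n X)"
  unfolding dual_def by (auto simp: dotp_comm)

lemma dual_span: "dual n (vs.span B) = {y \<in> vecs n. \<forall>b\<in>B. dotp n b y = 0}"
proof -
  have "dotp n x y = 0" if "x \<in> vs.span B" "\<forall>b\<in>B. dotp n b y = 0" for x y
    using that(1)
  proof (induction rule: vs.span_induct_alt)
    case base then show ?case by (simp add: dotp_def)
  next
    case (step c x z) then show ?case using that(2) by (simp only: dotp_add_left dotp_scale_left) simp
  qed
  then show ?thesis unfolding dual_def by (auto intro: vs.span_base)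
qed

lemma exists_dotp_prescribed:
  fixes B :: "(nat \<Rightarrow> 'a::field) set"
  assumes B: "B \<subseteq> vecs n" "vs.independent B"
  shows "\<exists>y\<in>vecs n. \<forall>b\<in>B. dotp n b y = t b"
proof -
  obtain g where g: "Vector_Spaces.linear vscale vscale g" "\<forall>b\<in>B. g b = (\<lambda>_. t b)"
    using vsp.linear_independent_extend[OF B(2), of "\<lambda>b _. t b"] by blast
  have hom: "module_hom vscale vscale g" using g(1) by (simp add: Vector_Spaces.linear_def)
  define unit where "unit i = (\<lambda>j. if j = i then 1 else 0 :: 'a)" for i :: nat
  define y where "y = (\<lambda>i. if i < n then g (unit i) 0 else 0)"
  have "g x 0 = dotp n x y" if x: "x \<in> vecs n" for x
  proof -
    have decomp: "x = (\<Sum>i<n. vscale (x i) (unit i))"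
    proof
      fix j show "x j = (\<Sum>i<n. vscale (x i) (unit i)) j"
        using x by (cases "j < n") (auto simp: sum_fun_apply unit_def vecs_def
            if_distrib[of "\<lambda>t. _ * t"] cong: if_cong)
    qed
    have "g x = (\<Sum>i<n. vscale (x i) (g (unit i)))"
      by (subst decomp) (simp add: module_hom.sum[OF hom] module_hom.scale[OF hom])
    then show ?thesis by (simp add: sum_fun_apply dotp_def y_def)
  qed
  then have "\<forall>b\<in>B. dotp n b y = t b" using g(2) B(1) by force
  moreover have "y \<in> vecs n" by (simp add: y_def vecs_def)
  ultimately show ?thesis by blast
qed

lemma card_eq_mult_card_fibres:
  assumes "finite X" "finite Y" "f ` X \<subseteq> Y" "\<And>y. y \<in> Y \<Longrightarrow> card {x\<in>X. f x = y} = c"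
  shows "card X = card Y * c"
proof -
  have X: "X = (\<Union>y\<in>Y. {x\<in>X. f x = y})" using assms(3) by auto
  have "card X = (\<Sum>y\<in>Y. card {x\<in>X. f x = y})"
    by (subst X, rule card_UN_disjoint) (use assms in auto)
  also have "\<dots> = card Y * c" using assms(4) by simp
  finally show ?thesis .
qed

lemma card_dotp_fibre:
  assumes y0: "y0 \<in> vecs n"
  shows "card {y \<in> vecs n. \<forall>b\<in>B. dotp n b y = dotp n b y0} = card (dual n (vs.span B))"
proof -
  have "{y \<in> vecs n. \<forall>b\<in>B. dotp n b y = dotp n b y0} = (\<lambda>w. y0 + w) ` dual n (vs.span B)"
  proof (intro equalityI subsetI)
    fix y assume y: "y \<in> {y \<in> vecs n. \<forall>b\<in>B. dotp n b y = dotp n b y0}"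
    then have "y - y0 \<in> dual n (vs.span B)"
      using y0 by (simp add: dual_span dotp_diff_right vecs_def)
    then show "y \<in> (\<lambda>w. y0 + w) ` dual n (vs.span B)" by (rule rev_image_eqI) simp
  next
    fix y assume "y \<in> (\<lambda>w. y0 + w) ` dual n (vs.span B)"
    then show "y \<in> {y \<in> vecs n. \<forall>b\<in>B. dotp n b y = dotp n b y0}"
      using y0 by (auto simp: dual_span dotp_add_right vecs_def)
  qed
  then show ?thesis by (simp add: card_image)
qed

text \<open>The map \<open>y \<mapsto> (\<langle>b, y\<rangle>)\<^sub>b\<^sub>\<in>\<^sub>B\<close> for a basis \<open>B\<close> of \<open>V\<close> is onto \<open>F\<^sup>B\<close>,
  and its fibres are the cosets of \<open>V\<^sup>\<perp>\<close>.\<close>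
lemma card_mult_card_dual:
  fixes V :: "(nat \<Rightarrow> 'a::{field,finite}) set"
  assumes V: "is_subspace n V"
  shows "card V * card (dual n V) = CARD('a) ^ n"
proof -
  obtain B where B: "B \<subseteq> V" "vs.independent B" "V \<subseteq> vs.span B"
    by (rule vs.basis_exists)
  have spB: "vs.span B = V" using B is_subspace_imp_subspace[OF V] vs.span_subspace by blast
  have Bv: "B \<subseteq> vecs n" using B(1) V by (auto simp: is_subspace_def)
  have finB: "finite B" using Bv finite_vecs finite_subset by blast
  define \<Phi> where "\<Phi> y = restrict (\<lambda>b. dotp n b y) B" for y :: "nat \<Rightarrow> 'a"
  have fibre: "card {y \<in> vecs n. \<Phi> y = t} = card (dual n V)" if t: "t \<in> B \<rightarrow>\<^sub>E UNIV" for t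
  proof -
    obtain y0 where y0: "y0 \<in> vecs n" "\<forall>b\<in>B. dotp n b y0 = t b"
      using exists_dotp_prescribed[OF Bv B(2)] by blast
    have "\<Phi> y = t \<longleftrightarrow> (\<forall>b\<in>B. dotp n b y = dotp n b y0)" for y
      using t y0(2) by (auto simp: \<Phi>_def fun_eq_iff PiE_def extensional_def)
    then show ?thesis using card_dotp_fibre[OF y0(1), of B] spB by simp
  qed
  have "card (vecs n :: (nat \<Rightarrow> 'a) set) = card (B \<rightarrow>\<^sub>E (UNIV :: 'a set)) * card (dual n V)"
    by (rule card_eq_mult_card_fibres[OF finite_vecs _ _ fibre]) (auto simp: finB finite_PiE \<Phi>_def)
  then show ?thesis using card_vecs[where 'a='a, of n] card_span_independent[OF finB B(2)] spB
    by (simp add: card_PiE finB mult.commute)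
qed

lemma dual_dual:
  fixes V :: "(nat \<Rightarrow> 'a::{field,finite}) set"
  assumes V: "is_subspace n V"
  shows "dual n (dual n V) = V"
proof -
  have "0 \<in> dual n V" by (simp add: dual_def vecs_def)
  then have "card (dual n V) > 0" using finite_dual card_gt_0_iff by blast
  moreover have "card V * card (dual n V) = card (dual n (dual n V)) * card (dual n V)"
    using card_mult_card_dual[OF V] card_mult_card_dual[OF is_subspace_dual, of n V] by (simp add: mult.commute)
  ultimately have "card (dual n (dual n V)) = card V" by simp
  moreover have "V \<subseteq> dual n (dual n V)"
    using V by (simp add: is_subspace_def subset_dual_dual)
  ultimately show ?thesis by (metis card_subset_eq[OF finite_dual])
qed

section \<open>Field embeddings and primitive elements\<close>

locale field_embedding =
  fixes emb :: "'a::field \<Rightarrow> 'b::field"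
  assumes field_emb: "field_emb emb"
begin

lemma emb_1 [simp]: "emb 1 = 1"
  and emb_add [simp]: "emb (x + y) = emb x + emb y"
  and emb_mult [simp]: "emb (x * y) = emb x * emb y"
  using field_emb by (simp_all add: field_emb_def)

lemma emb_0 [simp]: "emb 0 = 0"
  using emb_add[of 0 0] by (metis add_cancel_right_right add_0)

lemma emb_uminus [simp]: "emb (- x) = - emb x"
  using emb_add[of x "- x"] by (simp add: eq_neg_iff_add_eq_0 add.commute)

lemma emb_diff [simp]: "emb (x - y) = emb x - emb y"
  using emb_add[of x "- y"] by simp

lemma emb_eq_iff [simp]: "emb x = emb y \<longleftrightarrow> x = y"
proof
  assume "emb x = emb y"
  then have "emb (x - y) * emb (inverse (x - y)) = 0" by simp
  then have "(x - y) * inverse (x - y) \<noteq> 1" by (metis emb_1 emb_mult zero_neq_one)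
  then show "x = y" by (metis right_inverse eq_iff_diff_eq_0)
qed simp

lemma map_poly_emb_add: "map_poly emb (p + q) = map_poly emb p + map_poly emb q"
  by (intro poly_eqI) (simp add: coeff_map_poly)

lemma map_poly_emb_diff: "map_poly emb (p - q) = map_poly emb p - map_poly emb q"
  by (intro poly_eqI) (simp add: coeff_map_poly)

lemma map_poly_emb_smult: "map_poly emb (Polynomial.smult c p) = Polynomial.smult (emb c) (map_poly emb p)"
  by (rule map_poly_smult) simp_all

lemma map_poly_emb_mult: "map_poly emb (p * q) = map_poly emb p * map_poly emb q"
  by (induction p) (simp_all add: map_poly_emb_add map_poly_emb_smult map_poly_pCons)

definition pow_span :: "'b \<Rightarrow> nat \<Rightarrow> 'b set" where
  "pow_span \<theta> d = range (\<lambda>c. \<Sum>i<d. emb (c i) * \<theta> ^ i)"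

lemma pow_spanI: "x = (\<Sum>i<d. emb (c i) * \<theta> ^ i) \<Longrightarrow> x \<in> pow_span \<theta> d"
  unfolding pow_span_def by blast

lemma pow_spanE:
  assumes "x \<in> pow_span \<theta> d"
  obtains c where "x = (\<Sum>i<d. emb (c i) * \<theta> ^ i)"
  using assms unfolding pow_span_def by blast

lemma pow_span_zero [simp]: "pow_span \<theta> 0 = {0}"
  unfolding pow_span_def by simp

lemma zero_in_pow_span: "0 \<in> pow_span \<theta> d"
  by (rule pow_spanI[where c = "\<lambda>_. 0"]) simp

lemma pow_span_add: "x \<in> pow_span \<theta> d \<Longrightarrow> y \<in> pow_span \<theta> d \<Longrightarrow> x + y \<in> pow_span \<theta> d"
  by (elim pow_spanE, rule pow_spanI[where c = "\<lambda>i. _ i + _ i"])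
     (simp add: sum.distrib distrib_right)

lemma pow_span_scale: "x \<in> pow_span \<theta> d \<Longrightarrow> emb a * x \<in> pow_span \<theta> d"
  by (elim pow_spanE, rule pow_spanI[where c = "\<lambda>i. a * _ i"])
     (simp add: sum_distrib_left mult.assoc)

lemma pow_span_diff: "x \<in> pow_span \<theta> d \<Longrightarrow> y \<in> pow_span \<theta> d \<Longrightarrow> x - y \<in> pow_span \<theta> d"
  using pow_span_add[of x \<theta> d "emb (- 1) * y"] pow_span_scale[of y \<theta> d "- 1"] by simp

lemma pow_span_sum: "(\<And>i. i \<in> A \<Longrightarrow> f i \<in> pow_span \<theta> d) \<Longrightarrow> sum f A \<in> pow_span \<theta> d"
  by (induction A rule: infinite_finite_induct) (auto intro: zero_in_pow_span pow_span_add)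

lemma power_in_pow_span: "j < d \<Longrightarrow> \<theta> ^ j \<in> pow_span \<theta> d"
  by (rule pow_spanI[where c = "\<lambda>i. if i = j then 1 else 0"])
     (simp add: if_distrib[of emb] if_distrib[of "\<lambda>x. x * _"] cong: if_cong)

lemma pow_span_Suc: "v \<in> pow_span \<theta> d \<Longrightarrow> v + emb a * \<theta> ^ d \<in> pow_span \<theta> (Suc d)"
proof (elim pow_spanE)
  fix c assume "v = (\<Sum>i<d. emb (c i) * \<theta> ^ i)"
  moreover have "(\<Sum>i<d. emb ((c(d := a)) i) * \<theta> ^ i) = (\<Sum>i<d. emb (c i) * \<theta> ^ i)"
    by (rule sum.cong) auto
  ultimately show ?thesis by (intro pow_spanI[where c = "c(d := a)"]) simp
qed

lemma pow_span_mono: "pow_span \<theta> d \<subseteq> pow_span \<theta> (Suc d)"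
  using pow_span_Suc[where a = 0] by auto

end

lemma one_less_CARD_field: "1 < CARD('a::{field,finite})"
  using card_mono[of UNIV "{0, 1 :: 'a}"] by simp

definition primitive_element :: "'b::field \<Rightarrow> bool" where
  "primitive_element \<theta> \<longleftrightarrow> (\<forall>x. x \<noteq> 0 \<longrightarrow> (\<exists>j::nat. x = \<theta> ^ j))"

definition field_of_type :: "'a::field ring" where
  "field_of_type = \<lparr>carrier = UNIV, monoid.mult = (*), one = 1, ring.zero = 0, add = (+)\<rparr>"

lemma field_field_of_type: "field (field_of_type :: 'a::field ring)"
proof -
  have "\<exists>y. x + y = 0" for x :: 'a
    using add.right_inverse by blast
  moreover have "x \<noteq> 0 \<Longrightarrow> \<exists>y. x * y = 1" for x :: 'a
    by (rule exI[of _ "inverse x"]) simp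
  ultimately show ?thesis
    unfolding field_of_type_def by (unfold_locales; auto simp: algebra_simps Units_def)
qed

lemma pow_field_of_type: "x [^]\<^bsub>field_of_type\<^esub> (i::nat) = x ^ i"
  by (induction i) (simp_all add: field_of_type_def)

lemma exists_primitive_element: "\<exists>\<theta>::'b::{field,finite}. primitive_element \<theta>"
proof -
  have "finite (carrier (field_of_type :: 'b ring))" by simp
  then obtain \<theta> :: 'b where \<theta>:
    "carrier (mult_of field_of_type) = {\<theta> [^]\<^bsub>field_of_type\<^esub> i | i. i \<in> (UNIV :: nat set)}"
    using field.finite_field_mult_group_has_gen[OF field_field_of_type] by blast
  have "x \<in> carrier (mult_of field_of_type)" if "x \<noteq> 0" for x :: 'b
    using that by (simp add: field_of_type_def)
  then have "primitive_element \<theta>"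
    unfolding primitive_element_def \<theta> by (auto simp: pow_field_of_type)
  then show ?thesis ..
qed

locale finite_field_embedding = field_embedding emb
  for emb :: "'a::{field,finite} \<Rightarrow> 'b::{field,finite}"
begin

lemma card_pow_span_Suc:
  assumes "\<theta> ^ d \<notin> pow_span \<theta> d"
  shows "CARD('a) * card (pow_span \<theta> d) \<le> card (pow_span \<theta> (Suc d))"
proof -
  define h where "h = (\<lambda>(a, v). v + emb a * \<theta> ^ d)"
  have "inj_on h (UNIV \<times> pow_span \<theta> d)"
  proof (rule inj_onI, clarify)
    fix a v a' v' assume v: "v \<in> pow_span \<theta> d" and v': "v' \<in> pow_span \<theta> d"
      and "h (a, v) = h (a', v')"
    then have eq: "v - v' = emb (a' - a) * \<theta> ^ d" by (simp add: h_def algebra_simps)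
    show "a = a' \<and> v = v'"
    proof (cases "a = a'")
      case False
      then have "\<theta> ^ d = emb (inverse (a' - a)) * (v - v')"
        unfolding eq mult.assoc[symmetric] emb_mult[symmetric] by simp
      then show ?thesis using assms pow_span_scale[OF pow_span_diff[OF v v']] by simp
    qed (use eq in auto)
  qed
  then have "CARD('a) * card (pow_span \<theta> d) = card (h ` (UNIV \<times> pow_span \<theta> d))"
    by (simp add: card_image card_cartesian_product)
  also have "\<dots> \<le> card (pow_span \<theta> (Suc d))"
    by (rule card_mono) (auto simp: h_def intro: pow_span_Suc)
  finally show ?thesis .
qed

text \<open>For a primitive \<open>\<theta>\<close>, the first relation \<open>\<theta>\<^sup>d \<in> pow_span \<theta> d\<close> makes the span closed under
  multiplication by \<open>\<theta>\<close>, hence it contains every power of \<open>\<theta>\<close>, i.e.\ every element.\<close>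
lemma pow_span_eq_UNIV:
  assumes \<theta>: "primitive_element \<theta>" and closed: "\<theta> ^ d \<in> pow_span \<theta> d"
  shows "pow_span \<theta> d = UNIV"
proof -
  have d: "d > 0" using closed by (cases d) auto
  have times_\<theta>: "\<theta> * x \<in> pow_span \<theta> d" if x_in: "x \<in> pow_span \<theta> d" for x
  proof -
    obtain c where x: "x = (\<Sum>i<d. emb (c i) * \<theta> ^ i)" using x_in by (rule pow_spanE)
    have "\<theta> ^ Suc i \<in> pow_span \<theta> d" if "i < d" for i
      using closed power_in_pow_span[of "Suc i" d] that by (cases "Suc i = d") simp_all
    then have "(\<Sum>i<d. emb (c i) * \<theta> ^ Suc i) \<in> pow_span \<theta> d"
      by (intro pow_span_sum pow_span_scale) simp
    then show ?thesis unfolding x by (simp add: sum_distrib_left algebra_simps)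
  qed
  have "\<theta> ^ j \<in> pow_span \<theta> d" for j
  proof (induction j)
    case (Suc j)
    then show ?case using times_\<theta> by simp
  qed (use power_in_pow_span[OF d] in simp)
  then have "x \<in> pow_span \<theta> d" for x
    using \<theta> zero_in_pow_span[of \<theta> d] unfolding primitive_element_def by (cases "x = 0") auto
  then show ?thesis by blast
qed

lemma pow_span_or_card_ge:
  assumes "primitive_element \<theta>"
  shows "pow_span \<theta> d = UNIV \<or> CARD('a) ^ d \<le> card (pow_span \<theta> d)"
proof (induction d)
  case (Suc d)
  show ?case
  proof (cases "pow_span \<theta> d = UNIV")
    case True then show ?thesis using pow_span_mono[of \<theta> d] by auto
  next
    case False
    then have "CARD('a) * CARD('a) ^ d \<le> CARD('a) * card (pow_span \<theta> d)" using Suc by simp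
    also have "\<dots> \<le> card (pow_span \<theta> (Suc d))"
      using False pow_span_eq_UNIV[OF assms] card_pow_span_Suc by blast
    finally show ?thesis by simp
  qed
qed simp

lemma pow_span_primitive:
  assumes "primitive_element \<theta>" and "CARD('b) = CARD('a) ^ k"
  shows "pow_span \<theta> k = UNIV"
proof -
  have "card (pow_span \<theta> k) \<le> CARD('b)" by (rule card_mono) simp_all
  then have "pow_span \<theta> k = UNIV \<or> card (pow_span \<theta> k) = card (UNIV :: 'b set)"
    using pow_span_or_card_ge[OF assms(1), of k] assms(2) by linarith
  then show ?thesis using card_subset_eq[of UNIV "pow_span \<theta> k"] by auto
qed

lemma exists_points_avoiding:
  assumes "n < CARD('a)"
  obtains pts where "inj_on pts {..<n}" "\<forall>i<n. emb (pts i) \<noteq> \<theta>"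
proof -
  have "card (emb -` {\<theta>}) \<le> 1"
    using card_vimage_inj_on_le[of emb UNIV "{\<theta>}"] by (simp add: inj_on_def)
  then have "n \<le> card (UNIV - emb -` {\<theta>})"
    using assms by (simp add: card_Diff_subset)
  then obtain pts where pts: "pts ` {..<n} \<subseteq> UNIV - emb -` {\<theta>}" "inj_on pts {..<n}"
    using card_le_inj[of "{..<n}" "UNIV - emb -` {\<theta>}"] by auto
  show ?thesis
  proof (rule that)
    show "inj_on pts {..<n}" by (fact pts(2))
    show "\<forall>i<n. emb (pts i) \<noteq> \<theta>" using pts(1) by auto
  qed
qed

end

section \<open>The Reed--Solomon CSS code\<close>

lemma poly_prod_linear_factors_eq_0:
  "finite A \<Longrightarrow> poly (\<Prod>i\<in>A. [:- a i, 1:]) (x :: 'c::idom) = 0 \<longleftrightarrow> (\<exists>i\<in>A. x = a i)"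
  by (auto simp: poly_prod prod_zero_iff)

lemma degree_prod_linear_factors: "finite A \<Longrightarrow> degree (\<Prod>i\<in>A. [:- a i, 1 :: 'c::idom:]) = card A"
  by (subst degree_prod_eq_sum_degree) auto

locale rs_css_code = finite_field_embedding emb
  for emb :: "'a::{field,finite} \<Rightarrow> 'b::{field,finite}" +
  fixes \<theta> :: 'b and pts :: "nat \<Rightarrow> 'a" and n l k :: nat
  assumes pow_span_\<theta>: "pow_span \<theta> k = UNIV"
    and inj_pts: "inj_on pts {..<n}"
    and pts_not_\<theta>: "\<And>i. i < n \<Longrightarrow> emb (pts i) \<noteq> \<theta>"
    and k_pos: "0 < k" and k_le_l: "k \<le> l" and l_le_n: "l \<le> n"
begin

definition eval_\<theta> :: "'a poly \<Rightarrow> 'b" where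
  "eval_\<theta> p = poly (map_poly emb p) \<theta>"

definition codeword :: "'a poly \<Rightarrow> nat \<Rightarrow> 'a" where
  "codeword f = (\<lambda>i. if i < n then poly f (pts i) else 0)"

definition enc :: "'b \<Rightarrow> (nat \<Rightarrow> 'a) set" where
  "enc z = {codeword f | f. degree f < l \<and> eval_\<theta> f = z}"

definition QZ :: "(nat \<Rightarrow> 'a) set" where
  "QZ = {codeword f | f. degree f < l}"

text \<open>The code is \<open>CSS(dual n QX_perp, QZ)\<close>, so \<open>QX_perp\<close> is the paper's \<open>Q\<^sub>X\<^sup>\<perp>\<close>.\<close>
definition QX_perp :: "(nat \<Rightarrow> 'a) set" where
  "QX_perp = enc 0"

lemma eval_\<theta>_0 [simp]: "eval_\<theta> 0 = 0"
  and eval_\<theta>_1 [simp]: "eval_\<theta> 1 = 1"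
  by (simp_all add: eval_\<theta>_def)

lemma eval_\<theta>_add [simp]: "eval_\<theta> (p + q) = eval_\<theta> p + eval_\<theta> q"
  and eval_\<theta>_diff [simp]: "eval_\<theta> (p - q) = eval_\<theta> p - eval_\<theta> q"
  and eval_\<theta>_mult [simp]: "eval_\<theta> (p * q) = eval_\<theta> p * eval_\<theta> q"
  and eval_\<theta>_smult [simp]: "eval_\<theta> (Polynomial.smult c p) = emb c * eval_\<theta> p"
  and eval_\<theta>_monom [simp]: "eval_\<theta> (Polynomial.monom c i) = emb c * \<theta> ^ i"
  and eval_\<theta>_linear [simp]: "eval_\<theta> [:- a, 1:] = \<theta> - emb a"
  by (simp_all add: eval_\<theta>_def map_poly_emb_add map_poly_emb_diff map_poly_emb_mult
      map_poly_emb_smult map_poly_monom poly_monom map_poly_pCons)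

lemma eval_\<theta>_sum: "eval_\<theta> (\<Sum>i\<in>A. f i) = (\<Sum>i\<in>A. eval_\<theta> (f i))"
  by (induction A rule: infinite_finite_induct) simp_all

lemma eval_\<theta>_prod: "eval_\<theta> (\<Prod>i\<in>A. f i) = (\<Prod>i\<in>A. eval_\<theta> (f i))"
  by (induction A rule: infinite_finite_induct) simp_all

lemma exists_poly_eval_\<theta>: "\<exists>f. degree f < k \<and> eval_\<theta> f = z"
proof -
  obtain c where z: "z = (\<Sum>i<k. emb (c i) * \<theta> ^ i)"
    using pow_span_\<theta> by (auto elim: pow_spanE)
  define f where "f = (\<Sum>i<k. Polynomial.monom (c i) i)"
  have "degree f \<le> k - 1"
    unfolding f_def by (intro degree_sum_le) (auto intro: order_trans[OF degree_monom_le])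
  moreover have "eval_\<theta> f = z" unfolding f_def z by (simp add: eval_\<theta>_sum)
  ultimately show ?thesis using k_pos by (intro exI[of _ f]) simp
qed

text \<open>A kernel polynomial of minimal degree has no root \<open>pts i\<close>: such a root would split off
  a linear factor \<open>x - pts i\<close>, which does not vanish at \<open>\<theta>\<close>, leaving a kernel polynomial of
  smaller degree.\<close>
lemma kernel_poly_without_roots:
  obtains p where "p \<noteq> 0" "eval_\<theta> p = 0" "degree p \<le> k" "\<forall>i<n. poly p (pts i) \<noteq> 0"
proof -
  obtain g where g: "degree g < k" "eval_\<theta> g = \<theta> ^ k" using exists_poly_eval_\<theta> by blast
  define p0 where "p0 = Polynomial.monom 1 k - g"
  have "Polynomial.coeff p0 k = 1" using g(1) by (simp add: p0_def coeff_eq_0)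
  moreover have "degree p0 \<le> k"
    unfolding p0_def using g(1) by (intro degree_diff_le) (simp_all add: degree_monom_le)
  ultimately have p0: "p0 \<noteq> 0" "eval_\<theta> p0 = 0" "degree p0 \<le> k"
    using g(2) by (auto simp: p0_def)
  obtain p where p: "p \<noteq> 0" "eval_\<theta> p = 0"
    and min: "\<And>q. q \<noteq> 0 \<Longrightarrow> eval_\<theta> q = 0 \<Longrightarrow> degree p \<le> degree q"
    using ex_has_least_nat[of "\<lambda>p. p \<noteq> 0 \<and> eval_\<theta> p = 0" p0 degree] p0 by blast
  have "poly p (pts i) \<noteq> 0" if i: "i < n" for i
  proof
    assume "poly p (pts i) = 0"
    then obtain q where q: "p = [:- pts i, 1:] * q" by (auto simp: poly_eq_0_iff_dvd elim: dvdE)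
    then have "eval_\<theta> p = (\<theta> - emb (pts i)) * eval_\<theta> q" by (simp only: eval_\<theta>_mult eval_\<theta>_linear)
    then have "q \<noteq> 0" "eval_\<theta> q = 0" using p q pts_not_\<theta>[OF i] by auto
    then have "degree p \<le> degree q" by (rule min)
    moreover have "degree p = degree [:- pts i, 1:] + degree q"
      unfolding q using \<open>q \<noteq> 0\<close> by (intro degree_mult_eq) auto
    ultimately show False by simp
  qed
  moreover have "degree p \<le> k" using min[OF p0(1,2)] p0(3) by simp
  ultimately show ?thesis using that p by blast
qed

lemma codeword_add [simp]: "codeword (f + g) = codeword f + codeword g"
  and codeword_diff [simp]: "codeword (f - g) = codeword f - codeword g"
  and codeword_smult [simp]: "codeword (Polynomial.smult c f) = vscale c (codeword f)"
  and codeword_0 [simp]: "codeword 0 = 0"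
  by (auto simp: codeword_def fun_eq_iff)

lemma codeword_in_vecs: "codeword f \<in> vecs n"
  by (simp add: codeword_def vecs_def)

lemma card_pts: "card (pts ` {..<n}) = n"
  using card_image[OF inj_pts] by simp

lemma codeword_inject:
  assumes "degree f < n" "degree g < n" "codeword f = codeword g"
  shows "f = g"
proof (rule poly_eqI_degree[of "pts ` {..<n}"])
  fix x assume "x \<in> pts ` {..<n}"
  then obtain i where "i < n" "x = pts i" by blast
  then show "poly f x = poly g x" using fun_cong[OF assms(3), of i] by (simp add: codeword_def)
qed (use assms card_pts in auto)

lemma encI: "degree f < l \<Longrightarrow> codeword f \<in> enc (eval_\<theta> f)"
  unfolding enc_def by blast

lemma encE:
  assumes "x \<in> enc z"
  obtains f where "x = codeword f" "degree f < l" "eval_\<theta> f = z"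
  using assms unfolding enc_def by blast

lemma enc_add: "x \<in> enc a \<Longrightarrow> y \<in> enc b \<Longrightarrow> x + y \<in> enc (a + b)"
  by (elim encE) (metis codeword_add degree_add_less encI eval_\<theta>_add)

lemma enc_diff: "x \<in> enc a \<Longrightarrow> y \<in> enc b \<Longrightarrow> x - y \<in> enc (a - b)"
  by (elim encE) (metis codeword_diff degree_diff_less encI eval_\<theta>_diff)

lemma enc_scale: "x \<in> enc a \<Longrightarrow> vscale c x \<in> enc (emb c * a)"
  by (elim encE) (metis codeword_smult degree_smult_le encI eval_\<theta>_smult le_less_trans)

lemma enc_nonempty: "\<exists>x. x \<in> enc z"
proof -
  obtain f where "degree f < k" "eval_\<theta> f = z" using exists_poly_eval_\<theta> by blast
  then have "codeword f \<in> enc z" using encI[of f] k_le_l by simp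
  then show ?thesis by blast
qed

lemma enc_unique: "x \<in> enc a \<Longrightarrow> x \<in> enc b \<Longrightarrow> a = b"
  using l_le_n by (elim encE) (metis codeword_inject order_less_le_trans)

lemma QZ_eq_Union_enc: "QZ = (\<Union>z. enc z)"
  unfolding QZ_def enc_def by blast

lemma enc_eq_coset: "x \<in> enc z \<Longrightarrow> enc z = coset QX_perp x"
  unfolding coset_def QX_perp_def
  using enc_add[of x z _ 0] enc_diff[of _ z x z] by (force simp: algebra_simps)

lemma QZ_subset_vecs: "QZ \<subseteq> vecs n"
  unfolding QZ_def using codeword_in_vecs by blast

lemma QX_perp_subset_QZ: "QX_perp \<subseteq> QZ"
  unfolding QX_perp_def QZ_eq_Union_enc by blast

lemma is_subspace_QX_perp: "is_subspace n QX_perp"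
  unfolding is_subspace_def QX_perp_def
  using QX_perp_subset_QZ QZ_subset_vecs enc_add[of _ 0 _ 0] enc_scale[of _ 0]
    encI[of 0] k_pos k_le_l
  by (auto simp: QX_perp_def)

lemma is_subspace_QZ: "is_subspace n QZ"
  unfolding is_subspace_def
proof (intro conjI ballI allI)
  show "QZ \<subseteq> vecs n" by (rule QZ_subset_vecs)
  show "0 \<in> QZ" using is_subspace_QX_perp QX_perp_subset_QZ by (auto simp: is_subspace_def)
  show "x + y \<in> QZ" if "x \<in> QZ" "y \<in> QZ" for x y
    using that unfolding QZ_eq_Union_enc by (blast intro: enc_add)
  show "vscale c x \<in> QZ" if "x \<in> QZ" for c x
    using that unfolding QZ_eq_Union_enc by (blast intro: enc_scale)
qed

lemma card_enc: "card (enc z) = card QX_perp"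
proof -
  obtain x where x: "x \<in> enc z" using enc_nonempty by blast
  have "enc z = (\<lambda>w. x + w) ` QX_perp" unfolding enc_eq_coset[OF x] coset_def by blast
  then show ?thesis by (simp add: card_image)
qed

lemma card_QZ: "card QZ = CARD('b) * card QX_perp"
proof -
  have "card QZ = (\<Sum>z\<in>UNIV. card (enc z))"
    unfolding QZ_eq_Union_enc
  proof (rule card_UN_disjoint)
    show "\<forall>z\<in>UNIV. finite (enc z)"
      using finite_subset[OF _ finite_vecs] QZ_subset_vecs QZ_eq_Union_enc by blast
  qed (auto dest: enc_unique)
  then show ?thesis by (simp add: card_enc)
qed

lemma hweight_codeword:
  assumes "f \<noteq> 0" "degree f < l"
  shows "n + 1 \<le> hweight n (codeword f) + l"
proof -
  define N where "N = {i. i < n \<and> poly f (pts i) \<noteq> 0}"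
  define R where "R = {i. i < n \<and> poly f (pts i) = 0}"
  have "hweight n (codeword f) = card N"
    unfolding hweight_def N_def codeword_def by (rule arg_cong[where f = card]) auto
  moreover have "card R \<le> degree f"
  proof -
    have "card R = card (pts ` R)"
      by (rule card_image[symmetric], rule inj_on_subset[OF inj_pts]) (auto simp: R_def)
    also have "\<dots> \<le> card {x. poly f x = 0}"
      by (rule card_mono) (auto simp: R_def poly_roots_finite assms(1))
    also have "\<dots> \<le> degree f" by (rule card_poly_roots_bound[OF assms(1)])
    finally show ?thesis .
  qed
  moreover have "card N + card R = n"
  proof -
    have "N \<union> R = {..<n}" "N \<inter> R = {}" by (auto simp: N_def R_def)
    moreover have "finite N" "finite R" by (simp_all add: N_def R_def)
    ultimately show ?thesis using card_Un_disjoint[of N R] by simp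
  qed
  ultimately show ?thesis using assms(2) by linarith
qed

lemma dotp_codeword_single_support:
  assumes "j < n" and "\<And>i. i < n \<Longrightarrow> i \<noteq> j \<Longrightarrow> y i \<noteq> 0 \<Longrightarrow> poly f (pts i) = 0"
  shows "dotp n (codeword f) y = poly f (pts j) * y j"
proof -
  have "dotp n (codeword f) y = poly f (pts j) * y j + (\<Sum>i\<in>{..<n} - {j}. poly f (pts i) * y i)"
    using assms(1) by (simp add: dotp_def codeword_def sum.remove)
  also have "(\<Sum>i\<in>{..<n} - {j}. poly f (pts i) * y i) = 0"
    using assms(2) by (intro sum.neutral) auto
  finally show ?thesis by simp
qed

text \<open>A short nonzero \<open>y\<close> orthogonal to \<open>QX_perp\<close> is ruled out by testing it against
  \<open>p \<cdot> \<Prod>(x - pts i)\<close>, where \<open>p\<close> is a kernel polynomial without roots among the points and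
  the product runs over the support of \<open>y\<close> but one index \<open>j\<close>: this codeword meets the support
  of \<open>y\<close> only in \<open>j\<close>.\<close>
lemma hweight_dual_QX_perp:
  assumes y: "y \<in> dual n QX_perp" "y \<noteq> 0"
  shows "l + 1 \<le> hweight n y + k"
proof (rule ccontr)
  assume short: "\<not> ?thesis"
  define S where "S = {i. i < n \<and> y i \<noteq> 0}"
  have finS: "finite S" by (simp add: S_def)
  obtain j where yj: "y j \<noteq> 0" using y(2) by (auto simp: fun_eq_iff)
  moreover have "y \<in> vecs n" using y(1) by (simp add: dual_def)
  ultimately have "j < n" unfolding vecs_def using not_le by blast
  with yj have j: "j < n" "j \<in> S" by (simp_all add: S_def)
  obtain p where p: "p \<noteq> 0" "eval_\<theta> p = 0" "degree p \<le> k" "\<forall>i<n. poly p (pts i) \<noteq> 0"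
    by (rule kernel_poly_without_roots)
  define f where "f = p * (\<Prod>i\<in>S - {j}. [:- pts i, 1:])"
  have "degree f \<le> degree p + degree (\<Prod>i\<in>S - {j}. [:- pts i, 1:])"
    unfolding f_def by (rule degree_mult_le)
  also have "\<dots> \<le> k + card (S - {j})" using p(3) finS by (simp add: degree_prod_linear_factors)
  finally have "degree f \<le> k + card (S - {j})" .
  moreover have "hweight n y = card S" by (simp add: hweight_def S_def)
  moreover have "card S > 0" using j(2) finS card_gt_0_iff by blast
  ultimately have "degree f < l" using short j(2) finS by (simp add: card_Diff_singleton)
  then have "codeword f \<in> QX_perp" using encI[of f] p(2) by (simp add: QX_perp_def f_def)
  then have "dotp n (codeword f) y = 0" using y(1) by (simp add: dual_def)
  moreover have "dotp n (codeword f) y = poly f (pts j) * y j"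
    by (rule dotp_codeword_single_support[OF j(1)])
       (auto simp: f_def S_def poly_prod_linear_factors_eq_0)
  moreover have "poly f (pts j) \<noteq> 0"
  proof -
    have "pts j \<noteq> pts i" if "i \<in> S - {j}" for i
      using that j(1) inj_pts by (auto simp: S_def inj_on_def)
    then show ?thesis using p(4) j(1) finS by (simp add: f_def poly_prod_linear_factors_eq_0)
  qed
  ultimately show False using yj by simp
qed

definition node_poly :: "nat \<Rightarrow> 'a poly" where
  "node_poly i = (\<Prod>j\<in>{..<n} - {i}. [:- pts j, 1:])"

definition lagrange_basis :: "nat \<Rightarrow> 'a poly" where
  "lagrange_basis i = Polynomial.smult (inverse (poly (node_poly i) (pts i))) (node_poly i)"

definition interp :: "(nat \<Rightarrow> 'a) \<Rightarrow> 'a poly" where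
  "interp x = (\<Sum>i<n. Polynomial.smult (x i) (lagrange_basis i))"

definition dec :: "(nat \<Rightarrow> 'a) \<Rightarrow> 'b" where
  "dec x = eval_\<theta> (interp x)"

lemma poly_node_poly_eq_0: "i < n \<Longrightarrow> j < n \<Longrightarrow> poly (node_poly i) (pts j) = 0 \<longleftrightarrow> i \<noteq> j"
  using inj_pts by (auto simp: node_poly_def poly_prod_linear_factors_eq_0 inj_on_def)

lemma poly_lagrange_basis:
  "i < n \<Longrightarrow> j < n \<Longrightarrow> poly (lagrange_basis i) (pts j) = (if i = j then 1 else 0)"
  using poly_node_poly_eq_0[of i j] poly_node_poly_eq_0[of i i]
  by (cases "i = j") (simp_all add: lagrange_basis_def)

lemma degree_lagrange_basis: "i < n \<Longrightarrow> degree (lagrange_basis i) \<le> n - 1"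
  unfolding lagrange_basis_def node_poly_def
  by (rule order_trans[OF degree_smult_le]) (simp add: degree_prod_linear_factors)

lemma degree_interp: "degree (interp x) \<le> n - 1"
  unfolding interp_def
  by (intro degree_sum_le order_trans[OF degree_smult_le degree_lagrange_basis]) auto

lemma poly_interp: "j < n \<Longrightarrow> poly (interp x) (pts j) = x j"
  by (simp add: interp_def poly_sum poly_lagrange_basis if_distrib[of "(*) _"] cong: if_cong)

lemma interp_codeword: "degree f < n \<Longrightarrow> interp (codeword f) = f"
  using degree_interp[of "codeword f"] k_pos k_le_l l_le_n
  by (intro codeword_inject) (auto simp: codeword_def poly_interp fun_eq_iff)

lemma dec_add: "dec (x + y) = dec x + dec y"
  by (simp add: dec_def interp_def smult_add_left sum.distrib)

lemma dec_scale: "dec (vscale c x) = emb c * dec x"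
  by (simp add: dec_def interp_def eval_\<theta>_sum sum_distrib_left mult.assoc)

lemma dual_dual_QX_perp: "dual n (dual n QX_perp) = QX_perp"
  by (rule dual_dual[OF is_subspace_QX_perp])

lemma is_css_code: "is_css n (dual n QX_perp) QZ"
  unfolding is_css_def dual_dual_QX_perp
  using is_subspace_dual is_subspace_QZ QX_perp_subset_QZ by blast

lemma css_dim_code:
  assumes "CARD('b) = CARD('a) ^ k"
  shows "css_dim n (dual n QX_perp) QZ = k"
proof -
  have fin: "finite QZ" "finite QX_perp"
    using finite_subset[OF QZ_subset_vecs finite_vecs] finite_subset[OF QX_perp_subset_QZ] by auto
  have "card QZ = CARD('a) ^ sdim QZ" "card QX_perp = CARD('a) ^ sdim QX_perp"
    unfolding sdim_def using fin is_subspace_QZ is_subspace_QX_perp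
    by (auto intro: card_subspace is_subspace_imp_subspace)
  then have "CARD('a) ^ sdim QZ = CARD('a) ^ (k + sdim QX_perp)"
    using card_QZ assms by (simp add: power_add)
  then have "sdim QZ = k + sdim QX_perp"
    using one_less_CARD_field[where 'a = 'a] by (simp add: power_inject_exp)
  then show ?thesis unfolding css_dim_def dual_dual_QX_perp by simp
qed

lemma css_dist_code: "min (n + 1 - l) (l + 1 - k) \<le> css_dist n (dual n QX_perp) QZ"
proof -
  define W where "W = (dual n QX_perp - dual n QZ) \<union> (QZ - QX_perp)"
  have "W \<subseteq> vecs n" using QZ_subset_vecs by (auto simp: W_def dual_def)
  then have "finite W" using finite_vecs finite_subset by auto
  moreover have "W \<noteq> {}"
  proof -
    obtain x where x: "x \<in> enc 1" using enc_nonempty by blast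
    moreover have "x \<notin> enc 0" using enc_unique[OF x, of 0] by auto
    ultimately have "x \<in> QZ - QX_perp" by (auto simp: QZ_eq_Union_enc QX_perp_def)
    then show ?thesis by (auto simp: W_def)
  qed
  moreover have "min (n + 1 - l) (l + 1 - k) \<le> hweight n w" if w: "w \<in> W" for w
  proof (cases "w \<in> QZ - QX_perp")
    case True
    then obtain f where f: "w = codeword f" "degree f < l" by (auto simp: QZ_def)
    moreover have "f \<noteq> 0" using True f is_subspace_QX_perp by (auto simp: is_subspace_def)
    ultimately show ?thesis using hweight_codeword by fastforce
  next
    case False
    then have "w \<in> dual n QX_perp" "w \<noteq> 0"
      using w is_subspace_dual[of n QZ] by (auto simp: W_def is_subspace_def)
    then show ?thesis using hweight_dual_QX_perp by fastforce
  qed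
  ultimately show ?thesis unfolding css_dist_def dual_dual_QX_perp W_def[symmetric]
    by (simp add: Min_ge_iff)
qed

lemma is_enc_Z_code: "is_enc_Z emb n (dual n QX_perp) QZ enc"
  unfolding is_enc_Z_def quot_def dual_dual_QX_perp
proof (intro conjI allI impI)
  show "bij_betw enc UNIV (coset QX_perp ` QZ)"
    unfolding bij_betw_def
  proof
    show "inj enc"
    proof (rule injI)
      fix z z' assume "enc z = enc z'"
      moreover obtain x where "x \<in> enc z" using enc_nonempty by blast
      ultimately show "z = z'" using enc_unique by blast
    qed
    have "enc z \<in> coset QX_perp ` QZ" for z
      using enc_nonempty[of z] enc_eq_coset unfolding QZ_eq_Union_enc by blast
    moreover have "coset QX_perp x \<in> range enc" if "x \<in> QZ" for x
      using that enc_eq_coset unfolding QZ_eq_Union_enc by blast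
    ultimately show "range enc = coset QX_perp ` QZ" by blast
  qed
qed (simp_all add: enc_add enc_scale)

lemma mult_friendly_code:
  assumes "m * (l - 1) < n"
  shows "mult_friendly emb n m enc"
  unfolding mult_friendly_def
proof (intro exI[of _ dec] conjI ballI allI impI)
  fix z :: "nat \<Rightarrow> 'b" and z' :: "nat \<Rightarrow> nat \<Rightarrow> 'a"
  assume "\<forall>h<m. z' h \<in> enc (z h)"
  then have "\<forall>h. \<exists>f. h < m \<longrightarrow> z' h = codeword f \<and> degree f < l \<and> eval_\<theta> f = z h"
    unfolding enc_def by blast
  then obtain F where F: "\<And>h. h < m \<Longrightarrow> z' h = codeword (F h) \<and> degree (F h) < l \<and> eval_\<theta> (F h) = z h"
    by metis
  define P where "P = (\<Prod>h<m. F h)"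
  have "degree P \<le> (\<Sum>h<m. degree (F h))"
    unfolding P_def using degree_prod_sum_le[of "{..<m}" F] by (simp add: o_def)
  also have "\<dots> \<le> of_nat (card {..<m}) * (l - 1)" by (rule sum_bounded_above) (use F in fastforce)
  finally have "dec (codeword P) = eval_\<theta> P" using assms by (simp add: dec_def interp_codeword)
  also have "\<dots> = (\<Prod>h<m. z h)" unfolding P_def eval_\<theta>_prod using F by simp
  moreover have "codeword P = (\<lambda>i. if i < n then \<Prod>h<m. z' h i else 0)"
    using F by (auto simp: P_def codeword_def poly_prod fun_eq_iff intro!: prod.cong)
  ultimately show "(\<Prod>h<m. z h) = dec (\<lambda>i. if i < n then \<Prod>h<m. z' h i else 0)" by simp
qed (simp_all add: dec_add dec_scale)

end

theorem lemmaA1: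
  fixes emb :: "'a::{field,finite} \<Rightarrow> 'b::{field,finite}"
    and k r l m :: nat
  assumes "field_emb emb"
    and "CARD('b) = CARD('a) ^ k"
    and "k \<le> r" and "r \<le> l" and "2 * l \<le> CARD('a)"
    and "m * (k - 1) < r"
    and "m * (l - 1) < CARD('a) - r"
  shows "\<exists>QX QZ (Enc :: 'b \<Rightarrow> (nat \<Rightarrow> 'a) set).
           is_css (CARD('a) - r) QX QZ \<and>
           css_dim (CARD('a) - r) QX QZ = k \<and>
           css_dist (CARD('a) - r) QX QZ \<ge> l + 1 - r \<and>
           is_enc_Z emb (CARD('a) - r) QX QZ Enc \<and>
           mult_friendly emb (CARD('a) - r) m Enc"
proof -
  interpret finite_field_embedding emb by unfold_locales fact
  define n where "n = CARD('a) - r"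
  have "0 < k"
    using assms(2) one_less_CARD_field[where 'a = 'b] by (cases k) simp_all
  obtain \<theta> :: 'b where "primitive_element \<theta>" using exists_primitive_element by blast
  then have span: "pow_span \<theta> k = UNIV" using pow_span_primitive assms(2) by blast
  have "n < CARD('a)" using \<open>0 < k\<close> assms(3) by (simp add: n_def)
  then obtain pts where "inj_on pts {..<n}" "\<forall>i<n. emb (pts i) \<noteq> \<theta>"
    by (rule exists_points_avoiding)
  moreover have "l \<le> n" using assms(4,5) by (simp add: n_def)
  ultimately interpret C: rs_css_code emb \<theta> pts n l k
    using span \<open>0 < k\<close> assms(3,4) by unfold_locales simp_all
  have "l + 1 - r \<le> min (n + 1 - l) (l + 1 - k)" using assms(3-5) by (simp add: n_def) arith
  then have "l + 1 - r \<le> css_dist n (dual n C.QX_perp) C.QZ"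
    using C.css_dist_code by (rule order_trans)
  then show ?thesis
    unfolding n_def[symmetric]
    using C.is_css_code C.css_dim_code[OF assms(2)] C.is_enc_Z_code
      C.mult_friendly_code[OF assms(7)[folded n_def]]
    by blast
qed

end
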